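(* Let $p$ be a prime, $w\ge1$, and $\mu>0$ a real number with $2^\mu$ an integer. Let $c_\mu=\frac{2^\mu\sin(\pi/2^\mu)}{p\sin(\pi/p)}$. For any sets $A_1,\dots,A_{2^\mu}\subseteq\mathbb{F}_{p^w}$ with $\sum_{i=1}^{2^\mu}|A_i|=p^w$, \[ \sum_{i=1}^{2^\mu}\left|\widehat{\mathbb 1_{A_i}}(\alpha)\right|\le c_\mu\ \text{ if }\alpha\ne0,\qquad \sum_{i=1}^{2^\mu}\left|\widehat{\mathbb 1_{A_i}}(0)\right|=1. \]
   Context: For $A\subseteq\mathbb{F}_{p^w}$, $\mathbb 1_A$ is its characteristic function. $\mathrm{Tr}$ is the trace $\mathbb{F}_{p^w}\to\mathbb{F}_p$ (values in $\{0,\dots,p-1\}$), $\omega_p=e^{2\pi\mathbf i/p}$, and $\hat f(\alpha)=p^{-w}\sum_{x\in\mathbb{F}_{p^w}}f(x)\omega_p^{\mathrm{Tr}(\alpha x)}$. *)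

theory Defs
  imports "HOL-Analysis.Analysis"
begin

definition trace_nat :: "nat \<Rightarrow> nat \<Rightarrow> 'a::{field,finite} \<Rightarrow> nat" where
  "trace_nat p w x = (THE k. k < p \<and> of_nat k = (\<Sum>i<w. x ^ (p ^ i)))"

definition omega :: "nat \<Rightarrow> complex" where
  "omega p = exp (2 * of_real pi * \<i> / of_nat p)"

definition fourier :: "nat \<Rightarrow> nat \<Rightarrow> ('a::{field,finite} \<Rightarrow> complex) \<Rightarrow> 'a \<Rightarrow> complex" where
  "fourier p w f \<alpha> = (1 / of_nat (p ^ w)) * (\<Sum>x\<in>UNIV. f x * omega p ^ trace_nat p w (\<alpha> * x))"

definition ind :: "'a set \<Rightarrow> 'a \<Rightarrow> complex" where
  "ind A x = (if x \<in> A then 1 else 0)"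

end

(* For alpha <> 0 the map x -> Tr(alpha x) takes each value j in F_p at most M = p^(w-1) times on
   F_{p^w}, so p^w times the Fourier coefficient of 1_A at alpha is sum_j c_j omega^j with 0 <= c_j <= M.
   Slicing the weights into the M layers {j. t <= c_j} turns it into a sum of M sums of distinct p-th
   roots of unity, and m distinct p-th roots of unity sum to modulus at most sin(pi m/p)/sin(pi/p), the
   value of an arc.  Over the k = 2^mu sets the kM layer sizes add up to |A_1| + ... + |A_k| = pM, so
   concavity of sin on [0, pi] bounds the total by kM sin(pi/k)/sin(pi/p).  At alpha = 0 every
   character equals 1. *)

theory Submission
  imports Defs "HOL-Computational_Algebra.Polynomial" "HOL-Number_Theory.Residues"
begin

section \<open>Sums of distinct roots of unity\<close>

lemma sin_le_tangent:
  fixes x c :: real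
  assumes "0 \<le> x" "x \<le> pi" "0 \<le> c" "c \<le> pi"
  shows "sin x \<le> sin c + cos c * (x - c)"
proof (cases "c \<le> x")
  case True
  have "(\<lambda>t. sin c + cos c * (t - c) - sin t) c \<le> (\<lambda>t. sin c + cos c * (t - c) - sin t) x"
    by (rule deriv_nonneg_imp_mono[where g'="\<lambda>t. cos c - cos t"])
       (use True assms in \<open>auto intro!: derivative_eq_intros simp: cos_mono_le_eq\<close>)
  then show ?thesis by simp
next
  case False
  have "(\<lambda>t. sin t - cos c * (t - c)) x \<le> (\<lambda>t. sin t - cos c * (t - c)) c"
    by (rule deriv_nonneg_imp_mono[where g'="\<lambda>t. cos t - cos c"])
       (use False assms in \<open>auto intro!: derivative_eq_intros simp: cos_mono_le_eq\<close>)
  then show ?thesis by simp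
qed

lemma sum_sin_le_card_mult_sin_mean:
  fixes x :: "'b \<Rightarrow> real"
  assumes "finite S" "S \<noteq> {}" "\<And>s. s \<in> S \<Longrightarrow> 0 \<le> x s \<and> x s \<le> pi"
  shows "(\<Sum>s\<in>S. sin (x s)) \<le> card S * sin ((\<Sum>s\<in>S. x s) / card S)"
proof -
  define c where "c = (\<Sum>s\<in>S. x s) / card S"
  have card_pos: "card S > 0" using assms by (simp add: card_gt_0_iff)
  have "0 \<le> c" unfolding c_def using assms by (intro divide_nonneg_pos sum_nonneg) auto
  moreover have "c \<le> pi"
  proof -
    have "(\<Sum>s\<in>S. x s) \<le> (\<Sum>s\<in>S. pi)" using assms by (intro sum_mono) auto
    then show ?thesis unfolding c_def using card_pos by (simp add: divide_le_eq mult.commute)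
  qed
  ultimately have "(\<Sum>s\<in>S. sin (x s)) \<le> (\<Sum>s\<in>S. sin c + cos c * (x s - c))"
    using assms by (intro sum_mono sin_le_tangent) auto
  also have "\<dots> = card S * sin c + cos c * ((\<Sum>s\<in>S. x s) - card S * c)"
    by (simp add: sum.distrib sum_subtractf sum_distrib_left algebra_simps)
  also have "(\<Sum>s\<in>S. x s) - card S * c = 0" unfolding c_def using card_pos by simp
  finally show ?thesis unfolding c_def by simp
qed

lemma mono_on_if_deriv_nonneg:
  fixes f :: "real \<Rightarrow> real"
  assumes "\<And>x. (f has_real_derivative f' x) (at x)" "\<And>x. lo \<le> x \<Longrightarrow> x \<le> hi \<Longrightarrow> 0 \<le> f' x"
  shows "mono_on {lo..hi} f"
  by (intro monotone_onI deriv_nonneg_imp_mono[of _ _ f f']) (use assms in auto)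

lemma antimono_on_if_deriv_nonpos:
  fixes f :: "real \<Rightarrow> real"
  assumes "\<And>x. (f has_real_derivative f' x) (at x)" "\<And>x. lo \<le> x \<Longrightarrow> x \<le> hi \<Longrightarrow> f' x \<le> 0"
  shows "antimono_on {lo..hi} f"
proof -
  have "mono_on {lo..hi} (\<lambda>x. - f x)"
    by (rule mono_on_if_deriv_nonneg[where f' = "\<lambda>x. - f' x"]) (use assms in \<open>auto intro!: derivative_eq_intros\<close>)
  then show ?thesis by (auto simp: monotone_on_def)
qed

lemma cos_le_cos_inside:
  fixes a x :: real
  assumes "\<bar>x\<bar> \<le> a" "a \<le> pi"
  shows "cos a \<le> cos x"
  using assms cos_monotone_0_pi_le[of "\<bar>x\<bar>" a] by simp

lemma cos_le_cos_outside:
  fixes a x :: real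
  assumes "0 \<le> a" "a \<le> \<bar>x\<bar>" "\<bar>x\<bar> \<le> 2 * pi - a"
  shows "cos x \<le> cos a"
proof (cases "\<bar>x\<bar> \<le> pi")
  case True
  then show ?thesis using assms by (metis cos_abs_real cos_monotone_0_pi_le)
next
  case False
  have "cos x = cos (2 * pi - \<bar>x\<bar>)" by (metis cos_2pi_minus cos_abs_real)
  also have "\<dots> \<le> cos a" using assms False by (intro cos_monotone_0_pi_le) auto
  finally show ?thesis .
qed

(* Since h falls outside [lo, hi], h minus its clamped version is nonincreasing on [u, v]. *)
lemma increment_le_clamped_increment:
  fixes h :: "real \<Rightarrow> real"
  assumes "lo \<le> hi" and "antimono_on {u..lo} h" "mono_on {lo..hi} h" "antimono_on {hi..v} h"
    and "u \<le> s" "s \<le> t" "t \<le> v"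
  shows "h t - h s \<le> h (max lo (min hi t)) - h (max lo (min hi s))"
  using assms monotone_onD[OF assms(2), of s t] monotone_onD[OF assms(2), of s lo]
    monotone_onD[OF assms(2), of t lo] monotone_onD[OF assms(3), of s t]
    monotone_onD[OF assms(3), of lo t] monotone_onD[OF assms(3), of s hi]
    monotone_onD[OF assms(3), of lo hi] monotone_onD[OF assms(4), of s t]
    monotone_onD[OF assms(4), of hi t] monotone_onD[OF assms(4), of hi s]
  by (cases "s \<le> lo"; cases "t \<le> lo"; cases "s \<le> hi"; cases "t \<le> hi") (auto simp: max_def min_def)

lemma sum_increments_le_range:
  fixes h :: "real \<Rightarrow> real" and P :: "nat \<Rightarrow> real"
  assumes "lo \<le> hi" and "antimono_on {u..lo} h" "mono_on {lo..hi} h" "antimono_on {hi..v} h"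
    and "\<And>j. j < n \<Longrightarrow> P j \<le> P (Suc j)"
    and "\<And>j. j \<le> n \<Longrightarrow> u \<le> P j \<and> P j \<le> v"
    and "L \<subseteq> {..<n}"
  shows "(\<Sum>j\<in>L. h (P (Suc j)) - h (P j)) \<le> h hi - h lo"
proof -
  define F where "F t = h (max lo (min hi t))" for t
  have F_mono: "F s \<le> F t" if "s \<le> t" for s t
    unfolding F_def using \<open>lo \<le> hi\<close> that by (intro monotone_onD[OF assms(3)]) auto
  have F_bounds: "h lo \<le> F t \<and> F t \<le> h hi" for t
    unfolding F_def using \<open>lo \<le> hi\<close> by (intro conjI monotone_onD[OF assms(3)]) auto
  have "(\<Sum>j\<in>L. h (P (Suc j)) - h (P j)) \<le> (\<Sum>j\<in>L. F (P (Suc j)) - F (P j))"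
    unfolding F_def using assms
    by (intro sum_mono increment_le_clamped_increment) (auto simp: Suc_le_eq subset_eq)
  also have "\<dots> \<le> (\<Sum>j<n. F (P (Suc j)) - F (P j))"
    using assms F_mono by (intro sum_mono2) auto
  also have "\<dots> = F (P n) - F (P 0)"
    by (rule sum_lessThan_telescope)
  also have "\<dots> \<le> h hi - h lo"
    using F_bounds by (smt (verit))
  finally show ?thesis .
qed

lemma sum_cos_window_le:
  fixes p :: nat and L :: "nat set" and b :: real
  defines "a \<equiv> pi * card L / p"
  assumes "2 \<le> p" and "L \<subseteq> {..<p}" and "a - 2 * pi \<le> b" "b \<le> -a"
  shows "(\<Sum>j\<in>L. cos (b + pi / p + 2 * pi * j / p)) \<le> sin a / sin (pi / p)"
proof -
  have "card L \<le> p" using card_mono[OF _ \<open>L \<subseteq> {..<p}\<close>] by simp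
  then have a_range: "0 \<le> a" "a \<le> pi"
    using \<open>2 \<le> p\<close> unfolding a_def by (auto simp: field_simps)
  (* 2 sin(pi/p) cos(b + pi/p + 2 pi j/p) is the increment of sin over the j-th grid step, so
     after subtracting cos a times the step length the sum telescopes in h. *)
  define h where "h t = sin t - cos a * t" for t
  have h_deriv: "(h has_real_derivative cos t - cos a) (at t)" for t
    unfolding h_def by (auto intro!: derivative_eq_intros)
  have "mono_on {-a..a} h"
    by (rule mono_on_if_deriv_nonneg[OF h_deriv]) (auto intro!: cos_le_cos_inside simp: a_range)
  moreover have "antimono_on {a - 2 * pi..-a} h" "antimono_on {a..2 * pi - a} h"
    by (rule antimono_on_if_deriv_nonpos[OF h_deriv], use a_range in \<open>auto intro!: cos_le_cos_outside\<close>)+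
  moreover define P where "P j = b + 2 * pi * j / p" for j :: nat
  moreover have "P j \<le> P (Suc j)" for j
    unfolding P_def by (simp add: divide_right_mono)
  moreover have "a - 2 * pi \<le> P j \<and> P j \<le> 2 * pi - a" if "j \<le> p" for j
  proof -
    have "0 \<le> 2 * pi * j / p" "2 * pi * j / p \<le> 2 * pi"
      using that \<open>2 \<le> p\<close> by (auto simp: field_simps)
    then show ?thesis unfolding P_def using \<open>a - 2 * pi \<le> b\<close> \<open>b \<le> -a\<close> by linarith
  qed
  ultimately have incr_le: "(\<Sum>j\<in>L. h (P (Suc j)) - h (P j)) \<le> h a - h (-a)"
    using a_range \<open>L \<subseteq> {..<p}\<close> by (intro sum_increments_le_range[where u = "a - 2 * pi" and v = "2 * pi - a" and n = p]) auto
  have incr: "h (P (Suc j)) - h (P j) = 2 * sin (pi / p) * cos (b + pi / p + 2 * pi * j / p) - cos a * (2 * pi / p)" for j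
  proof -
    have "P (Suc j) = (b + pi / p + 2 * pi * j / p) + pi / p" "P j = (b + pi / p + 2 * pi * j / p) - pi / p"
      unfolding P_def using \<open>2 \<le> p\<close> by (auto simp: field_simps)
    then show ?thesis unfolding h_def by (simp only: sin_add sin_diff) (simp add: algebra_simps)
  qed
  have "2 * sin (pi / p) * (\<Sum>j\<in>L. cos (b + pi / p + 2 * pi * j / p)) - 2 * a * cos a \<le> 2 * sin a - 2 * a * cos a"
    using incr_le unfolding incr sum_subtractf sum_distrib_left[symmetric]
    by (simp add: a_def h_def mult_ac)
  moreover have "sin (pi / p) > 0"
    using \<open>2 \<le> p\<close> by (intro sin_gt_zero) (auto simp: field_simps)
  ultimately show ?thesis by (simp add: field_simps)
qed

lemma exists_int_shift_into_interval:
  fixes x \<delta> lo hi :: real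
  assumes "\<delta> > 0" "lo + \<delta> \<le> hi"
  obtains r :: int where "lo \<le> x + r * \<delta>" "x + r * \<delta> \<le> hi"
proof
  define r where "r = \<lceil>(lo - x) / \<delta>\<rceil>"
  have "(lo - x) / \<delta> \<le> r" "r < (lo - x) / \<delta> + 1"
    unfolding r_def by linarith+
  then have "lo - x \<le> r * \<delta>" "r * \<delta> < lo - x + \<delta>"
    using assms(1) by (simp_all add: field_simps)
  then show "lo \<le> x + r * \<delta>" "x + r * \<delta> \<le> hi"
    using assms(2) by linarith+
qed

lemma cos_shift_index_mod:
  fixes r :: int
  assumes "p > 0"
  shows "cos (\<phi> + 2 * pi * j / p) = cos (\<phi> + 2 * pi * r / p + 2 * pi * nat ((int j - r) mod int p) / p)"
proof -
  define d where "d = (int j - r) div int p"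
  have "int j = r + int p * d + int (nat ((int j - r) mod int p))"
    unfolding d_def using assms by simp
  then have "real j = r + real p * d + nat ((int j - r) mod int p)"
    by (metis of_int_add of_int_mult of_int_of_nat_eq)
  then have "\<phi> + 2 * pi * j / p = (\<phi> + 2 * pi * r / p + 2 * pi * nat ((int j - r) mod int p) / p) + 2 * pi * d"
    using assms by (simp add: field_simps)
  moreover have "cos (y + 2 * pi * d) = cos y" for y
    by (simp add: cos_add)
  ultimately show ?thesis
    by (simp only:)
qed

lemma sum_cos_equispaced_le:
  fixes p :: nat and L :: "nat set" and \<phi> :: real
  assumes "2 \<le> p" and "L \<subseteq> {..<p}" and "card L < p"
  shows "(\<Sum>j\<in>L. cos (\<phi> + 2 * pi * j / p)) \<le> sin (pi * card L / p) / sin (pi / p)"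
proof -
  define a where "a = pi * card L / p"
  have "a + pi / p = pi * (card L + 1) / p"
    by (simp add: a_def add_divide_distrib algebra_simps)
  also have "\<dots> \<le> pi"
    using \<open>card L < p\<close> by (simp add: pos_divide_le_eq)
  finally have "(a - 2 * pi) + 2 * pi / p \<le> -a"
    by simp
  (* Shifting the index by r modulo p rotates the angles by a multiple of 2 pi/p into the window
     of sum_cos_window_le; card L < p leaves room for one grid step in that window. *)
  then obtain r :: int
    where r: "a - 2 * pi \<le> (\<phi> - pi / p) + r * (2 * pi / p)" "(\<phi> - pi / p) + r * (2 * pi / p) \<le> -a"
    using \<open>2 \<le> p\<close> exists_int_shift_into_interval[of "2 * pi / p" "a - 2 * pi" "-a" "\<phi> - pi / p"] by auto
  define b where "b = (\<phi> - pi / p) + r * (2 * pi / p)"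
  define \<sigma> where "\<sigma> j = nat ((int j - r) mod int p)" for j
  have \<sigma>_less: "\<sigma> j < p" for j
    unfolding \<sigma>_def using \<open>2 \<le> p\<close> by (simp add: nat_less_iff)
  have cos_\<sigma>: "cos (\<phi> + 2 * pi * j / p) = cos (b + pi / p + 2 * pi * \<sigma> j / p)" for j
    using cos_shift_index_mod[of p \<phi> j r] \<open>2 \<le> p\<close> by (simp add: b_def \<sigma>_def field_simps)
  have "inj_on \<sigma> L"
  proof
    fix x y assume "x \<in> L" "y \<in> L" "\<sigma> x = \<sigma> y"
    then have "(int x - r) mod int p = (int y - r) mod int p"
      unfolding \<sigma>_def using \<open>2 \<le> p\<close> by (simp add: eq_nat_nat_iff)
    then have "int x mod int p = int y mod int p"
      by (metis mod_add_cong diff_add_cancel)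
    with \<open>x \<in> L\<close> \<open>y \<in> L\<close> \<open>L \<subseteq> {..<p}\<close> show "x = y"
      by (auto simp: zmod_int subset_eq)
  qed
  then have "(\<Sum>j\<in>L. cos (\<phi> + 2 * pi * j / p)) = (\<Sum>j\<in>\<sigma> ` L. cos (b + pi / p + 2 * pi * j / p))"
    by (simp add: sum.reindex cos_\<sigma>)
  also have "\<dots> \<le> sin a / sin (pi / p)"
    using sum_cos_window_le[of p "\<sigma> ` L" b] \<open>2 \<le> p\<close> \<sigma>_less r
    by (auto simp: card_image[OF \<open>inj_on \<sigma> L\<close>] a_def b_def)
  finally show ?thesis unfolding a_def .
qed

lemma norm_sum_roots_of_unity_le:
  fixes p :: nat and L :: "nat set"
  assumes "2 \<le> p" and "L \<subseteq> {..<p}"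
  shows "cmod (\<Sum>j\<in>L. cis (2 * pi * j / p)) \<le> sin (pi * card L / p) / sin (pi / p)"
proof (cases "card L < p")
  case True
  define z where "z = (\<Sum>j\<in>L. cis (2 * pi * j / p))"
  have "z * cis (- Arg z) = cmod z"
    by (subst (1) rcis_cmod_Arg[symmetric]) (simp add: rcis_def cis_mult)
  then have "cmod z = Re (z * cis (- Arg z))"
    by (metis Re_complex_of_real)
  also have "\<dots> = (\<Sum>j\<in>L. cos (- Arg z + 2 * pi * j / p))"
    unfolding z_def sum_distrib_right Re_sum by (simp add: cis_mult add.commute)
  also have "\<dots> \<le> sin (pi * card L / p) / sin (pi / p)"
    by (rule sum_cos_equispaced_le[OF assms True])
  finally show ?thesis unfolding z_def .
next
  case False
  then have "L = {..<p}"
    using assms card_mono[OF _ \<open>L \<subseteq> {..<p}\<close>] by (intro card_subset_eq) auto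
  then have "(\<Sum>j\<in>L. cis (2 * pi * j / p)) = \<Sum>{z::complex. z ^ p = 1}"
    using sum.reindex_bij_betw[OF Complex.bij_betw_roots_unity, of p "\<lambda>z. z"] \<open>2 \<le> p\<close> by simp
  also have "\<dots> = 0"
    using \<open>2 \<le> p\<close> by (intro sum_roots_unity) auto
  finally show ?thesis
    using \<open>L = {..<p}\<close> \<open>2 \<le> p\<close> by simp
qed

lemma sum_weighted_eq_sum_layers:
  fixes c :: "'i \<Rightarrow> nat" and z :: "'i \<Rightarrow> 'b::comm_semiring_1"
  assumes "finite J" "\<And>j. j \<in> J \<Longrightarrow> c j \<le> M"
  shows "(\<Sum>j\<in>J. of_nat (c j) * z j) = (\<Sum>t\<in>{1..M}. \<Sum>j\<in>{j\<in>J. t \<le> c j}. z j)"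
proof -
  have "of_nat (c j) * z j = (\<Sum>t\<in>{1..M}. if t \<le> c j then z j else 0)" if "j \<in> J" for j
  proof -
    have "{t\<in>{1..M}. t \<le> c j} = {1..c j}"
      using assms(2)[OF that] by auto
    then have "(\<Sum>t\<in>{t\<in>{1..M}. t \<le> c j}. z j) = of_nat (c j) * z j"
      by simp
    then show ?thesis
      by (subst (asm) sum.inter_filter) auto
  qed
  then have "(\<Sum>j\<in>J. of_nat (c j) * z j) = (\<Sum>j\<in>J. \<Sum>t\<in>{1..M}. if t \<le> c j then z j else 0)"
    by (rule sum.cong[OF refl])
  also have "\<dots> = (\<Sum>t\<in>{1..M}. \<Sum>j\<in>J. if t \<le> c j then z j else 0)"
    by (rule sum.swap)
  also have "\<dots> = (\<Sum>t\<in>{1..M}. \<Sum>j\<in>{j\<in>J. t \<le> c j}. z j)"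
    using assms(1) by (simp add: sum.inter_filter)
  finally show ?thesis .
qed

lemma norm_weighted_sum_roots_of_unity_le:
  fixes c :: "nat \<Rightarrow> nat"
  assumes "2 \<le> p" "\<And>j. j < p \<Longrightarrow> c j \<le> M"
  shows "cmod (\<Sum>j<p. of_nat (c j) * cis (2 * pi * j / p))
           \<le> (\<Sum>t\<in>{1..M}. sin (pi * card {j\<in>{..<p}. t \<le> c j} / p) / sin (pi / p))"
proof -
  have "cmod (\<Sum>j<p. of_nat (c j) * cis (2 * pi * j / p))
          = cmod (\<Sum>t\<in>{1..M}. \<Sum>j\<in>{j\<in>{..<p}. t \<le> c j}. cis (2 * pi * j / p))"
    using assms by (subst sum_weighted_eq_sum_layers) auto
  also have "\<dots> \<le> (\<Sum>t\<in>{1..M}. cmod (\<Sum>j\<in>{j\<in>{..<p}. t \<le> c j}. cis (2 * pi * j / p)))"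
    by (rule norm_sum)
  also have "\<dots> \<le> (\<Sum>t\<in>{1..M}. sin (pi * card {j\<in>{..<p}. t \<le> c j} / p) / sin (pi / p))"
    using assms by (intro sum_mono norm_sum_roots_of_unity_le) auto
  finally show ?thesis .
qed

section \<open>The absolute trace\<close>

(* The library's finite_field_power_card_eq_same needs the sort finite_field, which the type
   variables of sort {field, finite} used here do not carry. *)
lemma field_power_card_eq_self:
  fixes x :: "'a::{field,finite}"
  shows "x ^ CARD('a) = x"
proof (cases "x = 0")
  case False
  have "bij_betw ((*) x) (- {0}) (- {0})"
    using False by (intro bij_betwI[where g = "\<lambda>y. y / x"]) auto
  then have "(\<Prod>y\<in>-{0}. x * y) = (\<Prod>y\<in>-{0}. y)"
    by (rule prod.reindex_bij_betw)
  then have "x ^ card (- {0 :: 'a}) * (\<Prod>y\<in>-{0}. y) = 1 * (\<Prod>y\<in>-{0}. y)"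
    by (simp add: prod.distrib)
  then have "x ^ card (- {0 :: 'a}) = 1"
    by (subst (asm) mult_cancel_right) simp
  moreover have "CARD('a) = Suc (card (- {0 :: 'a}))"
    using card_Suc_Diff1[of UNIV "0 :: 'a"] by (simp add: Compl_eq_Diff_UNIV)
  ultimately show ?thesis
    by simp
qed (simp add: power_0_left)

definition field_trace :: "nat \<Rightarrow> nat \<Rightarrow> 'a::field \<Rightarrow> 'a" where
  "field_trace p w x = (\<Sum>i<w. x ^ (p ^ i))"

locale prime_power_field =
  fixes p w :: nat and field_type :: "'a::{field,finite} itself"
  assumes prime: "prime p" and w_pos: "w \<ge> 1" and card_field: "CARD('a) = p ^ w"
begin

lemma p_ge_2: "p \<ge> 2"
  using prime prime_ge_2_nat by blast

lemma CHAR_eq: "CHAR('a) = p"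
proof -
  have "prime CHAR('a)"
    by (intro prime_CHAR_semidom finite_imp_CHAR_pos) simp
  moreover have "CHAR('a) dvd p ^ w"
    using CHAR_dvd_CARD[where 'a = 'a] card_field by simp
  ultimately show ?thesis
    using prime prime_dvd_power primes_dvd_imp_eq by blast
qed

lemma field_trace_power_p: "field_trace p w (x :: 'a) ^ p = field_trace p w x"
proof -
  have "field_trace p w x ^ p = (\<Sum>i<w. x ^ (p ^ Suc i))"
    unfolding field_trace_def
    by (subst freshmans_dream_sum) (use prime in \<open>simp_all add: CHAR_eq power_mult[symmetric] mult.commute\<close>)
  also have "\<dots> = (\<Sum>i<Suc w. x ^ (p ^ i)) - x"
    by (subst sum.lessThan_Suc_shift) simp
  also have "\<dots> = field_trace p w x"
    by (simp add: field_trace_def card_field[symmetric] field_power_card_eq_self)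
  finally show ?thesis .
qed

lemma of_nat_eq_iff_less_p:
  assumes "k < p" "l < p"
  shows "(of_nat k :: 'a) = of_nat l \<longleftrightarrow> k = l"
proof
  have "(of_nat m :: 'a) \<noteq> of_nat n" if "m < n" "n < p" for m n
  proof
    assume "(of_nat m :: 'a) = of_nat n"
    then have "p dvd n - m"
      using of_nat_eq_iff_char_dvd[OF \<open>m < n\<close>, where 'a = 'a] CHAR_eq by simp
    then show False
      using that by (auto dest: dvd_imp_le)
  qed
  then show "(of_nat k :: 'a) = of_nat l \<Longrightarrow> k = l"
    using assms by (metis linorder_neqE_nat)
qed simp

lemma of_nat_power_p: "(of_nat k :: 'a) ^ p = of_nat k"
proof -
  have "(of_nat k :: 'a) ^ p = (\<Sum>i<k. 1) ^ p"
    by simp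
  also have "\<dots> = (\<Sum>i<k. 1 ^ p)"
    by (rule freshmans_dream_sum) (use prime in \<open>simp_all add: CHAR_eq\<close>)
  finally show ?thesis by simp
qed

lemma power_p_eq_self_imp_of_nat:
  assumes "(y :: 'a) ^ p = y"
  obtains k where "k < p" "y = of_nat k"
proof -
  define Q :: "'a poly" where "Q = Polynomial.monom 1 p - [:0, 1:]"
  have poly_Q: "poly Q z = z ^ p - z" for z
    unfolding Q_def by (simp add: poly_monom)
  have "Polynomial.coeff Q p = 1"
    using p_ge_2 by (simp add: Q_def coeff_pCons split: nat.split)
  then have "Q \<noteq> 0" by auto
  have "degree Q \<le> p"
    unfolding Q_def using p_ge_2 by (intro degree_diff_le) (auto simp: degree_monom_eq)
  then have roots_le: "card {z. poly Q z = 0} \<le> p"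
    using card_poly_roots_bound[OF \<open>Q \<noteq> 0\<close>] by simp
  have prime_field_roots: "of_nat ` {..<p} \<subseteq> {z::'a. poly Q z = 0}"
    by (auto simp: poly_Q of_nat_power_p)
  have "card (of_nat ` {..<p} :: 'a set) = p"
    by (subst card_image) (auto simp: inj_on_def of_nat_eq_iff_less_p)
  with roots_le have "card (of_nat ` {..<p} :: 'a set) = card {z::'a. poly Q z = 0}"
    using card_mono[OF _ prime_field_roots] by simp
  then have "of_nat ` {..<p} = {z::'a. poly Q z = 0}"
    using prime_field_roots by (intro card_subset_eq) auto
  moreover have "poly Q y = 0"
    using assms by (simp add: poly_Q)
  ultimately show ?thesis
    using that by blast
qed

lemma trace_nat_less_and_of_nat: "trace_nat p w (y :: 'a) < p \<and> of_nat (trace_nat p w y) = field_trace p w y"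
proof -
  obtain k where "k < p" "field_trace p w y = of_nat k"
    using power_p_eq_self_imp_of_nat[OF field_trace_power_p] by blast
  then have "\<exists>!k. k < p \<and> of_nat k = field_trace p w y"
    by (intro ex1I[of _ k]) (auto simp: of_nat_eq_iff_less_p)
  then show ?thesis
    unfolding trace_nat_def field_trace_def[symmetric] by (rule theI')
qed

lemma trace_nat_less: "trace_nat p w (y :: 'a) < p"
  using trace_nat_less_and_of_nat by blast

lemma of_nat_trace_nat: "(of_nat (trace_nat p w y) :: 'a) = field_trace p w y"
  using trace_nat_less_and_of_nat by blast

lemma trace_nat_zero: "trace_nat p w (0 :: 'a) = 0"
proof -
  have "field_trace p w (0 :: 'a) = 0"
    using p_ge_2 by (simp add: field_trace_def power_0_left)
  then show ?thesis
    using of_nat_trace_nat[of 0] trace_nat_less[of 0] p_ge_2 of_nat_eq_iff_less_p[of _ 0] by auto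
qed

lemma card_field_trace_eq_le: "card {y :: 'a. field_trace p w y = c} \<le> p ^ (w - 1)"
proof -
  define Q :: "'a poly" where "Q = (\<Sum>i<w. Polynomial.monom 1 (p ^ i)) - [:c:]"
  have poly_Q: "poly Q z = field_trace p w z - c" for z
    unfolding Q_def field_trace_def by (simp add: poly_sum poly_monom)
  have degree_monom: "degree (Polynomial.monom (1::'a) (p ^ i)) \<le> p ^ (w - 1)" if "i < w" for i
    using that p_ge_2 by (simp add: degree_monom_eq power_increasing)
  have "degree Q \<le> p ^ (w - 1)"
    unfolding Q_def using degree_monom
    by (intro degree_diff_le degree_sum_le) auto
  moreover have "Polynomial.coeff Q (p ^ (w - 1)) = 1"
  proof -
    have "(\<Sum>i<w. Polynomial.coeff (Polynomial.monom (1::'a) (p ^ i)) (p ^ (w - 1))) = (\<Sum>i<w. if i = w - 1 then 1 else 0)"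
      using p_ge_2 by (intro sum.cong) auto
    then show ?thesis
      using w_pos p_ge_2 by (simp add: Q_def coeff_sum coeff_pCons split: nat.split)
  qed
  then have "Q \<noteq> 0" by auto
  ultimately show ?thesis
    using card_poly_roots_bound[OF \<open>Q \<noteq> 0\<close>] by (simp add: poly_Q)
qed

lemma card_trace_nat_fiber_le:
  assumes "(\<alpha> :: 'a) \<noteq> 0"
  shows "card {x\<in>A. trace_nat p w (\<alpha> * x) = j} \<le> p ^ (w - 1)"
proof -
  have "{x\<in>A. trace_nat p w (\<alpha> * x) = j} \<subseteq> (\<lambda>y. y / \<alpha>) ` {y. field_trace p w y = of_nat j}"
  proof
    fix x assume "x \<in> {x\<in>A. trace_nat p w (\<alpha> * x) = j}"
    then have "field_trace p w (\<alpha> * x) = of_nat j"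
      using of_nat_trace_nat[of "\<alpha> * x"] by simp
    moreover have "x = (\<alpha> * x) / \<alpha>"
      using assms by simp
    ultimately show "x \<in> (\<lambda>y. y / \<alpha>) ` {y. field_trace p w y = of_nat j}"
      by blast
  qed
  then have "card {x\<in>A. trace_nat p w (\<alpha> * x) = j} \<le> card ((\<lambda>y. y / \<alpha>) ` {y. field_trace p w y = of_nat j})"
    by (intro card_mono) auto
  also have "\<dots> \<le> card {y. field_trace p w y = (of_nat j :: 'a)}"
    by (intro card_image_le) simp
  also have "\<dots> \<le> p ^ (w - 1)"
    by (rule card_field_trace_eq_le)
  finally show ?thesis .
qed

end

section \<open>Fourier coefficients of indicator functions\<close>

lemma omega_power: "omega p ^ j = cis (2 * pi * j / p)"
proof -
  have "omega p = cis (2 * pi / p)"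
    unfolding omega_def cis_conv_exp by (simp add: field_simps)
  then have "omega p ^ j = cis (2 * pi / p) ^ j"
    by (simp only:)
  also have "\<dots> = cis (real j * (2 * pi / p))"
    by (rule Complex.DeMoivre)
  finally show ?thesis
    by (simp add: field_simps)
qed

lemma fourier_ind:
  "fourier p w (ind A) \<alpha> = (\<Sum>x\<in>A. omega p ^ trace_nat p w (\<alpha> * x)) / of_nat (p ^ w)"
proof -
  have "(\<Sum>x\<in>UNIV. ind A x * omega p ^ trace_nat p w (\<alpha> * x))
          = (\<Sum>x\<in>UNIV. if x \<in> A then omega p ^ trace_nat p w (\<alpha> * x) else 0)"
    unfolding ind_def by (intro sum.cong) auto
  also have "\<dots> = (\<Sum>x\<in>A. omega p ^ trace_nat p w (\<alpha> * x))"
    by (subst sum.inter_filter[symmetric]) auto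
  finally show ?thesis
    unfolding fourier_def by simp
qed

lemma sum_comp_eq_sum_card_fibers:
  fixes f :: "nat \<Rightarrow> 'b::comm_semiring_1"
  assumes "finite A" "g ` A \<subseteq> {..<n}"
  shows "(\<Sum>x\<in>A. f (g x)) = (\<Sum>j<n. of_nat (card {x\<in>A. g x = j}) * f j)"
proof -
  have "(\<Sum>x\<in>A. f (g x)) = (\<Sum>j<n. \<Sum>x\<in>{x\<in>A. g x = j}. f (g x))"
    using assms by (intro sum.group[symmetric]) auto
  also have "\<dots> = (\<Sum>j<n. \<Sum>x\<in>{x\<in>A. g x = j}. f j)"
    by (intro sum.cong) auto
  finally show ?thesis
    by simp
qed

definition trace_layer :: "nat \<Rightarrow> nat \<Rightarrow> 'a::{field,finite} set \<Rightarrow> 'a \<Rightarrow> nat \<Rightarrow> nat set" where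
  "trace_layer p w A \<alpha> t = {j\<in>{..<p}. t \<le> card {x\<in>A. trace_nat p w (\<alpha> * x) = j}}"

context prime_power_field
begin

lemma fourier_ind_eq_weighted_sum:
  fixes A :: "'a set"
  shows "fourier p w (ind A) \<alpha> =
     (\<Sum>j<p. of_nat (card {x\<in>A. trace_nat p w (\<alpha> * x) = j}) * cis (2 * pi * j / p)) / of_nat (p ^ w)"
  unfolding fourier_ind omega_power[symmetric]
  by (subst sum_comp_eq_sum_card_fibers[where n = p]) (auto simp: trace_nat_less)

lemma sum_norm_fourier_ind_zero:
  fixes A :: "nat \<Rightarrow> 'a set"
  assumes "(\<Sum>i\<in>I. card (A i)) = p ^ w"
  shows "(\<Sum>i\<in>I. cmod (fourier p w (ind (A i)) 0)) = 1"
proof -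
  have "cmod (fourier p w (ind (A i)) 0) = card (A i) / p ^ w" for i
    by (simp add: fourier_ind trace_nat_zero norm_divide norm_power)
  then show ?thesis
    using assms p_ge_2 by (simp add: sum_divide_distrib[symmetric] flip: of_nat_sum)
qed

lemma card_trace_layer_le: "card (trace_layer p w A \<alpha> t) \<le> p"
  using card_mono[of "{..<p}" "trace_layer p w A \<alpha> t"] by (auto simp: trace_layer_def)

lemma norm_fourier_ind_le_sum_layers:
  fixes A :: "'a set"
  assumes "\<alpha> \<noteq> 0"
  shows "cmod (fourier p w (ind A) \<alpha>)
           \<le> (\<Sum>t\<in>{1..p ^ (w - 1)}. sin (pi * card (trace_layer p w A \<alpha> t) / p)) / (p ^ w * sin (pi / p))"
proof -
  define c where "c j = card {x\<in>A. trace_nat p w (\<alpha> * x) = j}" for j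
  have "cmod (fourier p w (ind A) \<alpha>) = cmod (\<Sum>j<p. of_nat (c j) * cis (2 * pi * j / p)) / p ^ w"
    by (simp add: fourier_ind_eq_weighted_sum c_def norm_divide norm_power)
  also have "\<dots> \<le> (\<Sum>t\<in>{1..p ^ (w - 1)}. sin (pi * card (trace_layer p w A \<alpha> t) / p) / sin (pi / p)) / p ^ w"
    using norm_weighted_sum_roots_of_unity_le[of p c "p ^ (w - 1)"] p_ge_2 card_trace_nat_fiber_le[OF assms]
    by (intro divide_right_mono) (auto simp: trace_layer_def c_def)
  finally show ?thesis
    by (simp add: sum_divide_distrib ac_simps)
qed

lemma card_eq_sum_card_trace_layers:
  fixes A :: "'a set"
  assumes "\<alpha> \<noteq> 0"
  shows "card A = (\<Sum>t\<in>{1..p ^ (w - 1)}. card (trace_layer p w A \<alpha> t))"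
proof -
  have "card A = (\<Sum>x\<in>A. (\<lambda>_. 1 :: nat) (trace_nat p w (\<alpha> * x)))"
    by simp
  also have "\<dots> = (\<Sum>j<p. of_nat (card {x\<in>A. trace_nat p w (\<alpha> * x) = j}) * 1)"
    by (intro sum_comp_eq_sum_card_fibers) (auto simp: trace_nat_less)
  also have "\<dots> = (\<Sum>t\<in>{1..p ^ (w - 1)}. card (trace_layer p w A \<alpha> t))"
    using card_trace_nat_fiber_le[OF assms] by (subst sum_weighted_eq_sum_layers) (auto simp: trace_layer_def)
  finally show ?thesis .
qed

lemma sum_norm_fourier_ind_le:
  fixes A :: "nat \<Rightarrow> 'a set" and \<alpha> :: 'a
  assumes "\<alpha> \<noteq> 0" "finite I" "card I = k" "k \<ge> 1" "(\<Sum>i\<in>I. card (A i)) = p ^ w"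
  shows "(\<Sum>i\<in>I. cmod (fourier p w (ind (A i)) \<alpha>)) \<le> k * sin (pi / k) / (p * sin (pi / p))"
proof -
  define M where "M = p ^ (w - 1)"
  have p_power_w: "p ^ w = p * M"
    using w_pos by (simp add: M_def power_Suc[symmetric])
  have "M \<ge> 1"
    using p_ge_2 by (simp add: M_def)
  define X where "X it = pi * card (trace_layer p w (A (fst it)) \<alpha> (snd it)) / p" for it :: "nat \<times> nat"
  have X_range: "0 \<le> X it \<and> X it \<le> pi" for it
    using p_ge_2 card_trace_layer_le by (auto simp: X_def field_simps)
  have sum_X: "(\<Sum>it\<in>I \<times> {1..M}. X it) = pi * M"
  proof -
    have "(\<Sum>it\<in>I \<times> {1..M}. X it) = (\<Sum>i\<in>I. \<Sum>t\<in>{1..M}. X (i, t))"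
      by (simp add: sum.cartesian_product)
    also have "\<dots> = pi / p * real (\<Sum>i\<in>I. card (A i))"
      using card_eq_sum_card_trace_layers[OF \<open>\<alpha> \<noteq> 0\<close>]
      by (simp add: X_def M_def sum_distrib_left sum_divide_distrib)
    finally show ?thesis
      using p_ge_2 by (simp add: assms(5) p_power_w)
  qed
  have card_I_M: "card (I \<times> {1..M}) = k * M"
    using assms by (simp add: card_cartesian_product)
  have "(\<Sum>it\<in>I \<times> {1..M}. sin (X it)) \<le> card (I \<times> {1..M}) * sin ((\<Sum>it\<in>I \<times> {1..M}. X it) / card (I \<times> {1..M}))"
    using assms \<open>M \<ge> 1\<close> X_range by (intro sum_sin_le_card_mult_sin_mean) (auto simp: card_I_M)
  also have "\<dots> = k * M * sin (pi / k)"
    unfolding card_I_M sum_X using \<open>M \<ge> 1\<close> by simp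
  finally have sum_sin_le: "(\<Sum>it\<in>I \<times> {1..M}. sin (X it)) \<le> k * M * sin (pi / k)" .
  have "(\<Sum>i\<in>I. cmod (fourier p w (ind (A i)) \<alpha>)) \<le> (\<Sum>i\<in>I. (\<Sum>t\<in>{1..M}. sin (X (i, t))) / (p ^ w * sin (pi / p)))"
    using norm_fourier_ind_le_sum_layers[OF \<open>\<alpha> \<noteq> 0\<close>] by (intro sum_mono) (simp add: X_def M_def)
  also have "\<dots> = (\<Sum>it\<in>I \<times> {1..M}. sin (X it)) / (p ^ w * sin (pi / p))"
    by (simp add: sum_divide_distrib[symmetric] sum.cartesian_product case_prod_unfold)
  also have "\<dots> \<le> k * M * sin (pi / k) / (p * M * sin (pi / p))"
    unfolding p_power_w using sum_sin_le p_ge_2 by (intro divide_right_mono) (auto intro!: sin_ge_zero)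
  also have "\<dots> = k * sin (pi / k) / (p * sin (pi / p))"
    using \<open>M \<ge> 1\<close> by simp
  finally show ?thesis .
qed

end

theorem lemma4p4:
  fixes p w :: nat and \<mu> :: real and A :: "nat \<Rightarrow> 'a::{field,finite} set"
  assumes "prime p" and "w \<ge> 1" and "CARD('a) = p ^ w"
    and "\<mu> > 0" and "2 powr \<mu> \<in> \<int>"
    and "(\<Sum>i\<in>{1..nat \<lfloor>2 powr \<mu>\<rfloor>}. card (A i)) = p ^ w"
  shows "(\<forall>\<alpha>::'a. \<alpha> \<noteq> 0 \<longrightarrow>
           (\<Sum>i\<in>{1..nat \<lfloor>2 powr \<mu>\<rfloor>}. cmod (fourier p w (ind (A i)) \<alpha>))
             \<le> (2 powr \<mu> * sin (pi / 2 powr \<mu>)) / (real p * sin (pi / real p)))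
       \<and> (\<Sum>i\<in>{1..nat \<lfloor>2 powr \<mu>\<rfloor>}. cmod (fourier p w (ind (A i)) 0)) = 1"
proof -
  interpret prime_power_field p w "TYPE('a)"
    using assms(1-3) by unfold_locales
  obtain n :: int where n: "2 powr \<mu> = of_int n"
    using assms(5) Ints_cases by blast
  have "2 powr \<mu> > 1"
    using \<open>\<mu> > 0\<close> by simp
  then have "n \<ge> 1"
    using n by simp
  define k where "k = nat \<lfloor>2 powr \<mu>\<rfloor>"
  have "real k = 2 powr \<mu>" "k \<ge> 1"
    unfolding k_def n using \<open>n \<ge> 1\<close> by simp_all
  note k_facts = this
  show ?thesis
  proof (intro conjI allI impI)
    fix \<alpha> :: 'a
    assume "\<alpha> \<noteq> 0"
    have "(\<Sum>i\<in>{1..k}. cmod (fourier p w (ind (A i)) \<alpha>)) \<le> k * sin (pi / k) / (p * sin (pi / p))"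
      by (rule sum_norm_fourier_ind_le) (use \<open>\<alpha> \<noteq> 0\<close> k_facts assms(6) in \<open>simp_all add: k_def\<close>)
    then show "(\<Sum>i\<in>{1..nat \<lfloor>2 powr \<mu>\<rfloor>}. cmod (fourier p w (ind (A i)) \<alpha>))
                 \<le> (2 powr \<mu> * sin (pi / 2 powr \<mu>)) / (real p * sin (pi / real p))"
      by (simp only: k_def[symmetric] k_facts)
  qed (rule sum_norm_fourier_ind_zero[OF assms(6)])
qed

end
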